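(* Let $m, n \in \mathbb N$, let $\mathcal M \subset M_m$ be a real vector subspace, and let $\phi \colon \mathcal M \to M_n$ be a real linear map such that $\phi(\mathcal M \cap \mathcal U_m) \subset \mathcal U_n$. Then for all $U, V \in \mathcal M \cap \mathcal U_m$: if $\operatorname{Re}(U^\ast V) = 0_m$, then $\operatorname{Re}(\phi(U)^\ast\phi(V)) = 0_n$.
   Context: $M_m$ is the set of $m\times m$ complex matrices, $\mathcal U_m$ the unitary ones, and $\operatorname{Re}A = \tfrac12(A+A^\ast)$. *)

theory Defs
  imports "HOL-Analysis.Analysis"
begin

text \<open>Complex m x m matrices are rendered as complex ^ 'm ^ 'm (m = CARD('m)).\<close>

definition cadj :: "complex ^ 'n ^ 'm \<Rightarrow> complex ^ 'm ^ 'n" where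
  "cadj A = (\<chi> i j. cnj (A $ j $ i))"

definition unitary_mat :: "complex ^ 'n ^ 'n \<Rightarrow> bool" where
  "unitary_mat U \<longleftrightarrow> cadj U ** U = mat 1 \<and> U ** cadj U = mat 1"

definition re_mat :: "complex ^ 'n ^ 'n \<Rightarrow> complex ^ 'n ^ 'n" where
  "re_mat A = (1/2 :: real) *\<^sub>R (A + cadj A)"

end

theory Submission
  imports Defs
begin

text \<open>For unitary \<open>U\<close>, \<open>V\<close> one has \<open>(U + V)\<^sup>* (U + V) = 2 + (U\<^sup>* V + V\<^sup>* U) = 2 + 2 Re(U\<^sup>* V)\<close>,
  so \<open>Re(U\<^sup>* V) = 0\<close> holds exactly when \<open>(U + V)/\<surd>2\<close> is unitary. This matrix lies in \<open>\<M>\<close>,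
  hence \<open>\<phi>((U + V)/\<surd>2) = (\<phi>(U) + \<phi>(V))/\<surd>2\<close> is unitary, and the same equivalence
  in \<open>M\<^sub>n\<close> gives \<open>Re(\<phi>(U)\<^sup>* \<phi>(V)) = 0\<close>.\<close>

lemma cadj_add: "cadj (A + B) = cadj A + cadj B"
  by (simp add: cadj_def vec_eq_iff)

lemma cadj_scaleR: "cadj (c *\<^sub>R A) = c *\<^sub>R cadj A"
  by (simp add: cadj_def vec_eq_iff complex_cnj_scaleR)

lemma cadj_cadj [simp]: "cadj (cadj A) = A"
  by (simp add: cadj_def vec_eq_iff)

lemma cadj_matrix_mult: "cadj ((A :: complex ^ 'n ^ 'm) ** (B :: complex ^ 'k ^ 'n)) = cadj B ** cadj A"
  by (simp add: cadj_def vec_eq_iff matrix_matrix_mult_def mult.commute)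

lemma matrix_add_rdistrib: "((A :: 'a::semiring_1 ^ 'n ^ 'm) + B) ** C = A ** C + B ** C"
  by (vector matrix_matrix_mult_def sum.distrib[symmetric] field_simps)

lemma scaleR_matrix_mult_left:
  "(c *\<^sub>R (A :: 'a::real_algebra_1 ^ 'n ^ 'm)) ** (B :: 'a ^ 'k ^ 'n) = c *\<^sub>R (A ** B)"
  by (simp add: vec_eq_iff matrix_matrix_mult_def scaleR_sum_right)

lemma scaleR_matrix_mult_right:
  "(A :: 'a::real_algebra_1 ^ 'n ^ 'm) ** (c *\<^sub>R (B :: 'a ^ 'k ^ 'n)) = c *\<^sub>R (A ** B)"
  by (simp add: vec_eq_iff matrix_matrix_mult_def scaleR_sum_right)

lemma re_mat_eq_0_iff: "re_mat A = 0 \<longleftrightarrow> A + cadj A = 0"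
  by (simp add: re_mat_def)

lemma re_mat_cadj_mult_eq_0_iff:
  "re_mat (cadj U ** V) = 0 \<longleftrightarrow> cadj U ** V + cadj V ** U = 0"
  by (simp add: re_mat_eq_0_iff cadj_matrix_mult)

lemma cadj_add_mult_add:
  fixes U V :: "complex ^ 'n ^ 'm"
  assumes "cadj U ** U = mat 1" and "cadj V ** V = mat 1"
  shows "cadj (U + V) ** (U + V) = 2 *\<^sub>R mat 1 + (cadj U ** V + cadj V ** U)"
proof -
  have "cadj (U + V) ** (U + V) = cadj U ** U + cadj V ** V + (cadj U ** V + cadj V ** U)"
    by (simp add: cadj_add matrix_add_ldistrib matrix_add_rdistrib add_ac)
  then show ?thesis
    using assms by (simp add: scaleR_2)
qed

lemma isometry_scaled_sum_iff:
  fixes U V :: "complex ^ 'n ^ 'm"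
  assumes "cadj U ** U = mat 1" and "cadj V ** V = mat 1"
  defines "W \<equiv> inverse (sqrt 2) *\<^sub>R (U + V)"
  shows "cadj W ** W = mat 1 \<longleftrightarrow> cadj U ** V + cadj V ** U = 0"
proof -
  have "cadj W ** W = (inverse (sqrt 2) * inverse (sqrt 2)) *\<^sub>R (cadj (U + V) ** (U + V))"
    by (simp add: W_def cadj_scaleR scaleR_matrix_mult_left scaleR_matrix_mult_right)
  also have "\<dots> = mat 1 + (1/2) *\<^sub>R (cadj U ** V + cadj V ** U)"
    by (simp add: cadj_add_mult_add[OF assms(1,2)] scaleR_add_right
        flip: inverse_mult_distrib)
  finally show ?thesis
    by simp
qed

text \<open>Conjugating \<open>U\<^sup>* V + V\<^sup>* U\<close> by the unitary \<open>U\<close> gives \<open>V U\<^sup>* + U V\<^sup>*\<close>.\<close>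

lemma cadj_mult_anticomm_swap:
  fixes U V :: "complex ^ 'n ^ 'n"
  assumes "unitary_mat U" and "cadj U ** V + cadj V ** U = 0"
  shows "U ** cadj V + V ** cadj U = 0"
proof -
  have "U ** (cadj U ** V + cadj V ** U) ** cadj U = 0"
    using assms(2) by simp
  then have "(U ** cadj U) ** V ** cadj U + U ** cadj V ** (U ** cadj U) = 0"
    by (simp add: matrix_add_ldistrib matrix_add_rdistrib matrix_mul_assoc)
  then show ?thesis
    using assms(1) by (simp add: unitary_mat_def add.commute)
qed

lemma unitary_mat_scaled_sum:
  fixes U V :: "complex ^ 'n ^ 'n"
  assumes "unitary_mat U" and "unitary_mat V" and "cadj U ** V + cadj V ** U = 0"
  shows "unitary_mat (inverse (sqrt 2) *\<^sub>R (U + V))"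
proof -
  let ?W = "inverse (sqrt 2) *\<^sub>R (U + V)"
  have "cadj ?W ** ?W = mat 1"
    using isometry_scaled_sum_iff[of U V] assms by (simp add: unitary_mat_def)
  moreover have "?W ** cadj ?W = mat 1"
  proof -
    have "U ** cadj V + V ** cadj U = 0"
      using cadj_mult_anticomm_swap assms(1,3) .
    then have "cadj (cadj ?W) ** cadj ?W = mat 1"
      using isometry_scaled_sum_iff[of "cadj U" "cadj V"] assms(1,2)
      by (simp add: unitary_mat_def cadj_add cadj_scaleR)
    then show ?thesis
      by simp
  qed
  ultimately show ?thesis
    by (simp add: unitary_mat_def)
qed

theorem corollary3p2:
  fixes M :: "(complex ^ 'm ^ 'm) set"
    and \<phi> :: "complex ^ 'm ^ 'm \<Rightarrow> complex ^ 'n ^ 'n"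
  assumes "subspace M"
    and "\<And>A B. A \<in> M \<Longrightarrow> B \<in> M \<Longrightarrow> \<phi> (A + B) = \<phi> A + \<phi> B"
    and "\<And>c A. A \<in> M \<Longrightarrow> \<phi> (c *\<^sub>R A) = c *\<^sub>R \<phi> A"
    and "\<And>U. U \<in> M \<Longrightarrow> unitary_mat U \<Longrightarrow> unitary_mat (\<phi> U)"
  shows "\<forall>U \<in> M. \<forall>V \<in> M. unitary_mat U \<longrightarrow> unitary_mat V \<longrightarrow>
           re_mat (cadj U ** V) = 0 \<longrightarrow> re_mat (cadj (\<phi> U) ** \<phi> V) = 0"
proof (intro ballI impI)
  fix U V
  assume "U \<in> M" "V \<in> M" "unitary_mat U" "unitary_mat V" "re_mat (cadj U ** V) = 0"
  define W where "W = inverse (sqrt 2) *\<^sub>R (U + V)"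
  have "W \<in> M"
    using assms(1) \<open>U \<in> M\<close> \<open>V \<in> M\<close> by (simp add: W_def subspace_add subspace_scale)
  moreover have "unitary_mat W"
    using unitary_mat_scaled_sum \<open>unitary_mat U\<close> \<open>unitary_mat V\<close> \<open>re_mat (cadj U ** V) = 0\<close>
    by (simp add: W_def re_mat_cadj_mult_eq_0_iff)
  moreover have "\<phi> W = inverse (sqrt 2) *\<^sub>R (\<phi> U + \<phi> V)"
    using assms(1-3) \<open>U \<in> M\<close> \<open>V \<in> M\<close> by (simp add: W_def subspace_add)
  ultimately have "unitary_mat (inverse (sqrt 2) *\<^sub>R (\<phi> U + \<phi> V))"
    using assms(4) by metis
  moreover have "unitary_mat (\<phi> U)" "unitary_mat (\<phi> V)"
    using assms(4) \<open>U \<in> M\<close> \<open>V \<in> M\<close> \<open>unitary_mat U\<close> \<open>unitary_mat V\<close> by blast+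
  ultimately show "re_mat (cadj (\<phi> U) ** \<phi> V) = 0"
    using isometry_scaled_sum_iff[of "\<phi> U" "\<phi> V"]
    by (simp add: unitary_mat_def re_mat_cadj_mult_eq_0_iff)
qed

end
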